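(* Let $S$ be a finite semigroup, $J$ a regular $\mathscr J$-class, and $\Omega$ a semisimple partial $S$-set all of whose strong orbits have apex $J$. Then there is a surjective $S$-equivariant map $\theta\colon\Omega e_J\otimes_{G_J}R_J\to\Omega$ which is injective on $(\Omega e_J\otimes_{G_J}R_J)e_J$. Consequently, the Green's quotient $(\Omega e_J\otimes_{G_J}R_J)/{\sim}$ with respect to $e_J$ is a quotient of $\Omega$ (i.e., there is a surjective $S$-equivariant map from $\Omega$ onto it), and $[(\Omega e_J\otimes_{G_J}R_J)/{\sim}]e_J\cong\Omega e_J$ as $G_J$-sets.
   Context: Semigroups act on the right; $e_J\in J$ is a fixed idempotent, $G_J$ its maximal subgroup, $R_J$ its $\mathscr R$-class. A partial $S$-set is a finite set with a right action by partial maps; equalities of possibly undefined expressions mean both undefined or both defined and equal; a map $\phi$ is $S$-equivariant if $\phi(\alpha s)=\phi(\alpha)s$ in this sense. For a partial $S$-set $\Lambda$, $\Lambda e_J=\{\alpha e_J\mid \alpha e_J\text{ defined}\}$, a $G_J$-set. The strong orbit of $\alpha$ is $\{\beta\mid\alpha S^1=\beta S^1\}$, transitive if $\mathscr OS\cap\mathscr O\ne\emptyset$; $\Omega$ is semisimple if all strong orbits are transitive and $S$-invariant. For a transitive strong orbit $\mathscr O$ (a partial $S$-set by restriction) there is a unique minimal $\mathscr J$-class $J$ with $\mathscr Os\ne\emptyset$ for some $s\in J$, called its apex. $R_J$ is a partial $S$-set via $r\cdot s=rs$ if $rs\in R_J$, undefined otherwise. For a right $G_J$-set $X$, $X\otimes_{G_J}R_J$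 is the orbit set of $X\times R_J$ under $(x,r)g=(xg,g^{-1}r)$, with orbits written $x\otimes r$, and partial $S$-action $(x\otimes r)s=x\otimes rs$ if $rs\in R_J$, undefined otherwise. For a partial $S$-set $\Lambda$, the Green's congruence with respect to $e_J$ is $\alpha\sim\beta$ iff $\alpha se_J=\beta se_J$ for all $s\in S$, and $\Lambda/{\sim}$ (with $[\alpha]s=[\alpha s]$) is the Green's quotient. *)

theory Defs
  imports Main
begin

(* Semigroups act on the right. The finite semigroup S is the type 'a of class
   {finite, semigroup_mult}. S^1 is handled by adjoining the trivial cases explicitly. *)

definition rideal :: "'a::semigroup_mult \<Rightarrow> 'a set" where
  "rideal a = {a} \<union> {a * y | y. True}"

definition lideal :: "'a::semigroup_mult \<Rightarrow> 'a set" where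
  "lideal a = {a} \<union> {x * a | x. True}"

definition tideal :: "'a::semigroup_mult \<Rightarrow> 'a set" where
  "tideal a = {a} \<union> {x * a | x. True} \<union> {a * y | y. True} \<union> {x * a * y | x y. True}"

definition Rclass :: "'a::semigroup_mult \<Rightarrow> 'a set" where
  "Rclass a = {b. rideal b = rideal a}"

definition Lclass :: "'a::semigroup_mult \<Rightarrow> 'a set" where
  "Lclass a = {b. lideal b = lideal a}"

definition Hclass :: "'a::semigroup_mult \<Rightarrow> 'a set" where
  "Hclass a = Rclass a \<inter> Lclass a"

definition Jclass :: "'a::semigroup_mult \<Rightarrow> 'a set" where
  "Jclass a = {b. tideal b = tideal a}"

definition is_Jclass :: "'a::semigroup_mult set \<Rightarrow> bool" where
  "is_Jclass J \<longleftrightarrow> (\<exists>a. J = Jclass a)"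

definition regular_Jclass :: "'a::semigroup_mult set \<Rightarrow> bool" where
  "regular_Jclass J \<longleftrightarrow> is_Jclass J \<and> (\<exists>a\<in>J. \<exists>x. a * x * a = a)"

definition Jclass_le :: "'a::semigroup_mult set \<Rightarrow> 'a set \<Rightarrow> bool" where
  "Jclass_le J1 J2 \<longleftrightarrow> (\<exists>a\<in>J1. \<exists>b\<in>J2. tideal a \<subseteq> tideal b)"

definition partial_Sset :: "'c set \<Rightarrow> ('c \<Rightarrow> 'a::semigroup_mult \<Rightarrow> 'c option) \<Rightarrow> bool" where
  "partial_Sset A act \<longleftrightarrow> finite A \<and>
     (\<forall>x\<in>A. \<forall>s y. act x s = Some y \<longrightarrow> y \<in> A) \<and>
     (\<forall>x\<in>A. \<forall>s t. act x (s * t) = Option.bind (act x s) (\<lambda>y. act y t))"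

definition equivariant ::
  "'c set \<Rightarrow> ('c \<Rightarrow> 'a::semigroup_mult \<Rightarrow> 'c option) \<Rightarrow> ('d \<Rightarrow> 'a \<Rightarrow> 'd option) \<Rightarrow> ('c \<Rightarrow> 'd) \<Rightarrow> bool" where
  "equivariant A actA actB \<phi> \<longleftrightarrow> (\<forall>x\<in>A. \<forall>s. map_option \<phi> (actA x s) = actB (\<phi> x) s)"

definition act_image :: "'c set \<Rightarrow> ('c \<Rightarrow> 'a \<Rightarrow> 'c option) \<Rightarrow> 'a \<Rightarrow> 'c set" where
  "act_image A act e = {y. \<exists>x\<in>A. act x e = Some y}"

definition orbit1 :: "('c \<Rightarrow> 'a \<Rightarrow> 'c option) \<Rightarrow> 'c \<Rightarrow> 'c set" where
  "orbit1 act x = {x} \<union> {y. \<exists>s. act x s = Some y}"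

definition strong_orbit :: "'c set \<Rightarrow> ('c \<Rightarrow> 'a \<Rightarrow> 'c option) \<Rightarrow> 'c \<Rightarrow> 'c set" where
  "strong_orbit A act x = {y\<in>A. orbit1 act x = orbit1 act y}"

definition transitive_orbit :: "('c \<Rightarrow> 'a \<Rightarrow> 'c option) \<Rightarrow> 'c set \<Rightarrow> bool" where
  "transitive_orbit act Orb \<longleftrightarrow> (\<exists>x\<in>Orb. \<exists>s y. act x s = Some y \<and> y \<in> Orb)"

definition invariant_orbit :: "('c \<Rightarrow> 'a \<Rightarrow> 'c option) \<Rightarrow> 'c set \<Rightarrow> bool" where
  "invariant_orbit act Orb \<longleftrightarrow> (\<forall>x\<in>Orb. \<forall>s y. act x s = Some y \<longrightarrow> y \<in> Orb)"

definition semisimple :: "'c set \<Rightarrow> ('c \<Rightarrow> 'a \<Rightarrow> 'c option) \<Rightarrow> bool" where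
  "semisimple A act \<longleftrightarrow> (\<forall>x\<in>A. transitive_orbit act (strong_orbit A act x)
                                  \<and> invariant_orbit act (strong_orbit A act x))"

(* Orb s \<noteq> {} for the strong orbit Orb viewed as partial S-set by restriction *)
definition orbit_hit :: "('c \<Rightarrow> 'a \<Rightarrow> 'c option) \<Rightarrow> 'c set \<Rightarrow> 'a \<Rightarrow> bool" where
  "orbit_hit act Orb s \<longleftrightarrow> (\<exists>x\<in>Orb. \<exists>y\<in>Orb. act x s = Some y)"

definition hitting_Jclasses :: "('c \<Rightarrow> 'a::semigroup_mult \<Rightarrow> 'c option) \<Rightarrow> 'c set \<Rightarrow> 'a set set" where
  "hitting_Jclasses act Orb = {J. is_Jclass J \<and> (\<exists>s\<in>J. orbit_hit act Orb s)}"

definition minimal_hitting :: "('c \<Rightarrow> 'a::semigroup_mult \<Rightarrow> 'c option) \<Rightarrow> 'c set \<Rightarrow> 'a set \<Rightarrow> bool" where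
  "minimal_hitting act Orb J \<longleftrightarrow> J \<in> hitting_Jclasses act Orb \<and>
     (\<forall>J'\<in>hitting_Jclasses act Orb. Jclass_le J' J \<longrightarrow> J' = J)"

definition apex :: "('c \<Rightarrow> 'a::semigroup_mult \<Rightarrow> 'c option) \<Rightarrow> 'c set \<Rightarrow> 'a set \<Rightarrow> bool" where
  "apex act Orb J \<longleftrightarrow> minimal_hitting act Orb J \<and> (\<forall>J'. minimal_hitting act Orb J' \<longrightarrow> J' = J)"

(* orbit x \<otimes> r of (x,r) under (x,r)g = (xg, g^{-1} r), g \<in> G = G_J (identity e) *)
definition tcl :: "'c set \<Rightarrow> ('c \<Rightarrow> 'a::semigroup_mult \<Rightarrow> 'c option) \<Rightarrow> 'a \<Rightarrow> 'c \<Rightarrow> 'a \<Rightarrow> ('c \<times> 'a) set" where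
  "tcl X act e x r = {(x', r'). x' \<in> X \<and> r' \<in> Rclass e \<and>
      (\<exists>g\<in>Hclass e. \<exists>h\<in>Hclass e. g * h = e \<and> h * g = e \<and> act x g = Some x' \<and> r' = h * r)}"

definition tensor :: "'c set \<Rightarrow> ('c \<Rightarrow> 'a::semigroup_mult \<Rightarrow> 'c option) \<Rightarrow> 'a \<Rightarrow> ('c \<times> 'a) set set" where
  "tensor X act e = {tcl X act e x r | x r. x \<in> X \<and> r \<in> Rclass e}"

definition tact :: "'c set \<Rightarrow> ('c \<Rightarrow> 'a::semigroup_mult \<Rightarrow> 'c option) \<Rightarrow> 'a \<Rightarrow> ('c \<times> 'a) set \<Rightarrow> 'a \<Rightarrow> ('c \<times> 'a) set option" where
  "tact X act e C s = (let p = (SOME p. p \<in> C) in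
      if snd p * s \<in> Rclass e then Some (tcl X act e (fst p) (snd p * s)) else None)"

definition green_rel :: "'c set \<Rightarrow> ('c \<Rightarrow> 'a::semigroup_mult \<Rightarrow> 'c option) \<Rightarrow> 'a \<Rightarrow> ('c \<times> 'c) set" where
  "green_rel A act e = {(x, y). x \<in> A \<and> y \<in> A \<and>
      (\<forall>s. Option.bind (act x s) (\<lambda>z. act z e) = Option.bind (act y s) (\<lambda>z. act z e))}"

definition gcl :: "'c set \<Rightarrow> ('c \<Rightarrow> 'a::semigroup_mult \<Rightarrow> 'c option) \<Rightarrow> 'a \<Rightarrow> 'c \<Rightarrow> 'c set" where
  "gcl A act e x = green_rel A act e `` {x}"

definition green_quot :: "'c set \<Rightarrow> ('c \<Rightarrow> 'a::semigroup_mult \<Rightarrow> 'c option) \<Rightarrow> 'a \<Rightarrow> 'c set set" where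
  "green_quot A act e = A // green_rel A act e"

definition gact :: "'c set \<Rightarrow> ('c \<Rightarrow> 'a::semigroup_mult \<Rightarrow> 'c option) \<Rightarrow> 'a \<Rightarrow> 'c set \<Rightarrow> 'a \<Rightarrow> 'c set option" where
  "gact A act e Q s = (let x = (SOME x. x \<in> Q) in map_option (gcl A act e) (act x s))"

end

theory Submission
  imports Defs
begin

text \<open>
  The key fact is that \<open>a \<in> e S\<close> lies in \<open>R\<^sub>J\<close> as soon as \<open>x (a u) = x\<close> for some point \<open>x\<close>
  and some \<open>u\<close>; this is where minimality of the apex and stability of finite semigroups enter.
  It shows that every point of \<open>\<Omega>\<close> is of the form \<open>x r\<close> with \<open>x \<in> \<Omega> e\<close> and \<open>r \<in> R\<^sub>J\<close>, and,
  with semisimplicity, that \<open>x r s\<close> is defined only if \<open>r s \<in> R\<^sub>J\<close>. Hence \<open>\<theta>(x \<otimes> r) = x r\<close>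
  is a well-defined equivariant surjection. Every class in \<open>(\<Omega> e \<otimes> R\<^sub>J) e\<close> has the form
  \<open>x \<otimes> e\<close>, so \<open>\<theta>\<close> is injective there. A surjection that is equivariant and injective on the
  \<open>e\<close>-part identifies the Green's relations of source and target, which yields both the
  quotient map onto the Green's quotient and the isomorphism of the \<open>e\<close>-parts.
\<close>

section \<open>Green's relations at an idempotent\<close>

lemma Rclass_idem_iff:
  assumes "e * e = (e::'a::semigroup_mult)"
  shows "a \<in> Rclass e \<longleftrightarrow> e * a = a \<and> (\<exists>u. a * u = e)"
proof
  assume "a \<in> Rclass e"
  hence eq: "rideal a = rideal e" by (simp add: Rclass_def)
  have "a \<in> rideal a" by (simp add: rideal_def)
  hence "a \<in> rideal e" using eq by simp
  hence "e * a = a" using assms by (auto simp: rideal_def) (metis mult.assoc)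
  moreover have "e \<in> rideal e" by (simp add: rideal_def)
  hence "e \<in> rideal a" using eq by simp
  hence "\<exists>u. a * u = e" using assms by (auto simp: rideal_def)
  ultimately show "e * a = a \<and> (\<exists>u. a * u = e)" by simp
next
  assume "e * a = a \<and> (\<exists>u. a * u = e)"
  then obtain u where "e * a = a" and "a * u = e" by blast
  hence "rideal a = rideal e"
    unfolding rideal_def by (auto simp: mult.assoc) (metis mult.assoc)+
  thus "a \<in> Rclass e" by (simp add: Rclass_def)
qed

lemma Lclass_idem_iff:
  assumes "e * e = (e::'a::semigroup_mult)"
  shows "a \<in> Lclass e \<longleftrightarrow> a * e = a \<and> (\<exists>v. v * a = e)"
proof
  assume "a \<in> Lclass e"
  hence eq: "lideal a = lideal e" by (simp add: Lclass_def)
  have "a \<in> lideal a" by (simp add: lideal_def)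
  hence "a \<in> lideal e" using eq by simp
  hence "a * e = a" using assms by (auto simp: lideal_def mult.assoc)
  moreover have "e \<in> lideal e" by (simp add: lideal_def)
  hence "e \<in> lideal a" using eq by simp
  hence "\<exists>v. v * a = e" using assms by (auto simp: lideal_def)
  ultimately show "a * e = a \<and> (\<exists>v. v * a = e)" by simp
next
  assume "a * e = a \<and> (\<exists>v. v * a = e)"
  then obtain v where "a * e = a" and "v * a = e" by blast
  hence "lideal a = lideal e"
    unfolding lideal_def by (auto simp: mult.assoc) (metis mult.assoc)+
  thus "a \<in> Lclass e" by (simp add: Lclass_def)
qed

lemma Hclass_idem_iff:
  assumes "e * e = (e::'a::semigroup_mult)"
  shows "a \<in> Hclass e \<longleftrightarrow> e * a = a \<and> a * e = a \<and> (\<exists>u. a * u = e) \<and> (\<exists>v. v * a = e)"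
  using Rclass_idem_iff[OF assms] Lclass_idem_iff[OF assms] by (auto simp: Hclass_def)

lemma idem_in_Hclass: "e * e = (e::'a::semigroup_mult) \<Longrightarrow> e \<in> Hclass e"
  by (auto simp: Hclass_idem_iff)

lemma Hclass_mult_closed:
  assumes idem: "e * e = (e::'a::semigroup_mult)" and "g \<in> Hclass e" "h \<in> Hclass e"
  shows "g * h \<in> Hclass e"
proof -
  obtain u v where g: "e * g = g" "g * e = g" "g * u = e" "v * g = e"
    using assms by (auto simp: Hclass_idem_iff)
  obtain u' v' where h: "e * h = h" "h * e = h" "h * u' = e" "v' * h = e"
    using assms by (auto simp: Hclass_idem_iff)
  have "(g * h) * (u' * u) = g * ((h * u') * u)" and "(v' * v) * (g * h) = v' * ((v * g) * h)"
    by (simp_all add: mult.assoc)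
  hence "(g * h) * (u' * u) = e" and "(v' * v) * (g * h) = e"
    using g h by (simp_all add: mult.assoc[symmetric])
  moreover have "e * (g * h) = g * h" and "(g * h) * e = g * h"
    using g h by (simp_all add: mult.assoc[symmetric]) (simp add: mult.assoc)
  ultimately show ?thesis using idem by (auto simp: Hclass_idem_iff)
qed

lemma Hclass_inverse:
  assumes idem: "e * e = (e::'a::semigroup_mult)" and "a \<in> Hclass e"
  shows "\<exists>b\<in>Hclass e. a * b = e \<and> b * a = e"
proof -
  obtain u v where a: "e * a = a" "a * e = a" "a * u = e" "v * a = e"
    using assms by (auto simp: Hclass_idem_iff)
  have vu: "v * e = e * u" using a by (metis mult.assoc)
  have inv: "a * (v * e) = e" "(v * e) * a = e" using a vu by (metis mult.assoc)+
  moreover have "e * (v * e) = v * e" "(v * e) * e = v * e"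
    using idem vu by (metis mult.assoc)+
  ultimately have "v * e \<in> Hclass e" unfolding Hclass_idem_iff[OF idem] by blast
  thus ?thesis using inv by blast
qed

lemma tideal_mult_subset: "tideal (x * y) \<subseteq> tideal (x::'a::semigroup_mult)"
  unfolding tideal_def by (auto simp: mult.assoc)

lemma tideal_idem_factor:
  assumes "x * x = (x::'a::semigroup_mult)" and "y \<in> tideal x"
  shows "\<exists>p q. y = p * x * q"
  using assms unfolding tideal_def by (auto simp: mult.assoc) (metis mult.assoc)+

lemma idem_in_tideal_factor:
  assumes "y * y = (y::'a::semigroup_mult)" and "y \<in> tideal x"
  shows "\<exists>p q. y = p * x * q"
  using assms unfolding tideal_def by (auto simp: mult.assoc) (metis mult.assoc)+

section \<open>Finite semigroups\<close>

text \<open>\<open>spow x n\<close> is \<open>x\<^sup>n\<^sup>+\<^sup>1\<close>: a semigroup has no unit, hence no zeroth power.\<close>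

fun spow :: "'a::semigroup_mult \<Rightarrow> nat \<Rightarrow> 'a" where
  "spow x 0 = x"
| "spow x (Suc n) = spow x n * x"

lemma spow_add: "spow x (Suc (m + n)) = spow x m * spow x n"
  by (induction n) (auto simp: mult.assoc)

lemma spow_in_rideal: "spow x n \<in> rideal x"
proof (cases n)
  case (Suc m)
  thus ?thesis using spow_add[of x 0 m] by (auto simp: rideal_def)
qed (simp add: rideal_def)

lemma spow_in_lideal: "spow x n \<in> lideal x"
  by (cases n) (auto simp: lideal_def)

lemma spow_period:
  assumes "spow x i = spow x (i + p)" and "i \<le> n"
  shows "spow x (n + m * p) = spow x n"
proof -
  have shift: "spow x (k + p + i) = spow x (k + i)" for k
  proof (induction k)
    case 0
    show ?case using assms(1) by (simp add: add.commute)
  qed simp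
  have step: "spow x (n' + p) = spow x n'" if "i \<le> n'" for n'
    using shift[of "n' - i"] that by simp
  show ?thesis
  proof (induction m)
    case (Suc m)
    have "spow x (n + Suc m * p) = spow x ((n + m * p) + p)" by (simp add: algebra_simps)
    also have "\<dots> = spow x n" using step[of "n + m * p"] assms(2) Suc by simp
    finally show ?case .
  qed simp
qed

lemma finite_semigroup_idem_power:
  fixes x :: "'a::{finite, semigroup_mult}"
  shows "\<exists>n. spow x n * spow x n = spow x n"
proof -
  have "\<not> inj (spow x)"
  proof
    assume "inj (spow x)"
    hence "finite (UNIV :: nat set)" using finite_imageD[of "spow x" UNIV] by simp
    thus False by simp
  qed
  then obtain i j where "i < j" "spow x i = spow x j"
    unfolding inj_def by (metis linorder_neqE_nat)
  then obtain p where p: "p > 0" "spow x i = spow x (i + p)"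
    by (metis less_imp_add_positive)
  define n where "n = (i + 1) * p - 1"
  have "(i + 1) * 1 \<le> (i + 1) * p" using p(1) by (intro mult_le_mono2) simp
  hence n: "Suc n = (i + 1) * p" and "i \<le> n" by (simp_all add: n_def)
  have "spow x n * spow x n = spow x (Suc (n + n))" by (rule spow_add[symmetric])
  also have "\<dots> = spow x (n + (i + 1) * p)" by (simp only: n[symmetric] add_Suc_right)
  also have "\<dots> = spow x n" by (rule spow_period[OF p(2) \<open>i \<le> n\<close>])
  finally show ?thesis by blast
qed

lemma spow_sandwich: "e = p * e * q \<Longrightarrow> e = spow p n * e * spow q n"
proof (induction n)
  case (Suc n)
  hence "e = spow p n * (p * e * q) * spow q n" by metis
  also have "\<dots> = spow p (Suc n) * e * spow q (Suc n)"
    using spow_add[of q 0 n] by (simp add: mult.assoc)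
  finally show ?case .
qed simp

lemma finite_semigroup_stable_right:
  fixes e p q :: "'a::{finite, semigroup_mult}"
  assumes "e = p * e * q"
  shows "e \<in> rideal (e * q)"
proof -
  obtain n where idem: "spow q n * spow q n = spow q n"
    using finite_semigroup_idem_power by blast
  have sw: "e = spow p n * e * spow q n" by (rule spow_sandwich[OF assms])
  have "e * spow q n = spow p n * e * (spow q n * spow q n)"
    by (subst (1) sw) (simp add: mult.assoc)
  also have "\<dots> = e" by (simp only: idem flip: sw)
  finally have "e = e * spow q n" ..
  thus ?thesis using spow_in_rideal[of q n] by (auto simp: rideal_def mult.assoc)
qed

lemma finite_semigroup_stable_left:
  fixes e p q :: "'a::{finite, semigroup_mult}"
  assumes "e = p * e * q"
  shows "e \<in> lideal (p * e)"
proof -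
  obtain n where idem: "spow p n * spow p n = spow p n"
    using finite_semigroup_idem_power by blast
  have sw: "e = spow p n * e * spow q n" by (rule spow_sandwich[OF assms])
  have "spow p n * e = (spow p n * spow p n) * e * spow q n"
    by (subst (1) sw) (simp add: mult.assoc)
  also have "\<dots> = e" by (simp only: idem flip: sw)
  finally have "e = spow p n * e" ..
  thus ?thesis using spow_in_lideal[of p n] by (auto simp: lideal_def mult.assoc)
qed

lemma finite_Rclass_Hclass:
  fixes e a :: "'a::{finite, semigroup_mult}"
  assumes idem: "e * e = e" and "a \<in> Rclass e" and "a * e = a"
  shows "a \<in> Hclass e"
proof -
  obtain u where "e * a = a" "a * u = e" using assms by (auto simp: Rclass_idem_iff)
  hence "e = a * e * u" using assms(3) by simp
  hence "e \<in> lideal a" using finite_semigroup_stable_left assms(3) by metis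
  hence "\<exists>v. v * a = e" using idem \<open>e * a = a\<close> by (auto simp: lideal_def)
  thus ?thesis using assms by (auto simp: Hclass_def Rclass_idem_iff Lclass_idem_iff)
qed

section \<open>Partial \<open>S\<close>-sets and the Green's congruence\<close>

lemma partial_Sset_closed:
  "partial_Sset A act \<Longrightarrow> x \<in> A \<Longrightarrow> act x s = Some y \<Longrightarrow> y \<in> A"
  unfolding partial_Sset_def by blast

lemma partial_Sset_act_mult:
  "partial_Sset A act \<Longrightarrow> x \<in> A \<Longrightarrow> act x (s * t) = Option.bind (act x s) (\<lambda>y. act y t)"
  unfolding partial_Sset_def by blast

lemma partial_Sset_act_mult_Some:
  "partial_Sset A act \<Longrightarrow> x \<in> A \<Longrightarrow> act x s = Some y \<Longrightarrow> act x (s * t) = act y t"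
  by (simp add: partial_Sset_act_mult)

lemma partial_Sset_act_multD:
  assumes "partial_Sset A act" "x \<in> A" "act x (s * t) = Some z"
  shows "\<exists>y. act x s = Some y \<and> act y t = Some z"
  using assms by (simp add: partial_Sset_act_mult bind_eq_Some_conv)

lemma act_image_idem_iff:
  assumes "partial_Sset A act" and "e * e = e"
  shows "x \<in> act_image A act e \<longleftrightarrow> x \<in> A \<and> act x e = Some x"
proof
  assume "x \<in> act_image A act e"
  then obtain z where z: "z \<in> A" "act z e = Some x" by (auto simp: act_image_def)
  have "act x e = act z (e * e)" using partial_Sset_act_mult_Some[OF assms(1) z] by simp
  thus "x \<in> A \<and> act x e = Some x" using z assms partial_Sset_closed by fastforce
qed (auto simp: act_image_def)

lemma act_in_act_image:
  assumes "partial_Sset A act" "x \<in> A" "act x g = Some y" "g * e = g"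
  shows "y \<in> act_image A act e"
proof -
  have "act y e = act x (g * e)" using partial_Sset_act_mult_Some[OF assms(1-3)] by simp
  thus ?thesis using assms partial_Sset_closed by (force simp: act_image_def)
qed

lemma orbit1_trans:
  assumes A: "partial_Sset A act" and x: "x \<in> A" and y: "y \<in> orbit1 act x"
  shows "orbit1 act y \<subseteq> orbit1 act x"
proof
  fix z assume z: "z \<in> orbit1 act y"
  show "z \<in> orbit1 act x"
  proof (cases "y = x \<or> z = y")
    case True thus ?thesis using y z by auto
  next
    case False
    then obtain s t where "act x s = Some y" "act y t = Some z"
      using y z by (auto simp: orbit1_def)
    hence "act x (s * t) = Some z" using partial_Sset_act_mult_Some[OF A x] by simp
    thus ?thesis by (auto simp: orbit1_def)
  qed
qed

lemma orbit1_fixed: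
  assumes "act x e = Some x"
  shows "y \<in> orbit1 act x \<Longrightarrow> \<exists>t. act x t = Some y"
    and "x \<in> orbit1 act y \<Longrightarrow> \<exists>t. act y t = Some x"
  using assms by (auto simp: orbit1_def)

lemma map_option_inj_on_eq_iff:
  assumes "inj_on f X" "set_option u \<subseteq> X" "set_option v \<subseteq> X"
  shows "map_option f u = map_option f v \<longleftrightarrow> u = v"
  using assms by (cases u; cases v) (auto simp: inj_on_def)

lemma green_rel_equiv: "equiv A (green_rel A act e)"
  unfolding equiv_def refl_on_def sym_def trans_def green_rel_def by auto

text \<open>Without the reachability hypothesis the Green's relation need not respect definedness:
  \<open>\<alpha> s\<close> could be defined while \<open>\<beta> s\<close> is not.\<close>

lemma green_rel_act_Some:
  assumes A: "partial_Sset A act"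
    and reach: "\<forall>y\<in>A. \<exists>t. Option.bind (act y t) (\<lambda>z. act z e) \<noteq> None"
    and ab: "(a, b) \<in> green_rel A act e" and a': "act a s = Some a'"
  shows "\<exists>b'. act b s = Some b' \<and> (a', b') \<in> green_rel A act e"
proof -
  have a: "a \<in> A" and b: "b \<in> A"
    and same: "\<And>t. Option.bind (act a t) (\<lambda>z. act z e) = Option.bind (act b t) (\<lambda>z. act z e)"
    using ab by (auto simp: green_rel_def)
  have a'A: "a' \<in> A" using partial_Sset_closed[OF A a a'] .
  obtain t where "Option.bind (act a' t) (\<lambda>z. act z e) \<noteq> None" using reach a'A by blast
  hence "Option.bind (act b (s * t)) (\<lambda>z. act z e) \<noteq> None"
    using same[of "s * t"] partial_Sset_act_mult_Some[OF A a a'] by simp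
  then obtain b' where b': "act b s = Some b'"
    using partial_Sset_act_mult[OF A b] by (cases "act b s") auto
  have "Option.bind (act a' t) (\<lambda>z. act z e) = Option.bind (act b' t) (\<lambda>z. act z e)" for t
    using same[of "s * t"] partial_Sset_act_mult_Some[OF A a a'] partial_Sset_act_mult_Some[OF A b b']
    by simp
  moreover have "b' \<in> A" using partial_Sset_closed[OF A b b'] .
  ultimately show ?thesis using a'A b' by (auto simp: green_rel_def)
qed

lemma green_rel_act:
  assumes "partial_Sset A act"
    and "\<forall>y\<in>A. \<exists>t. Option.bind (act y t) (\<lambda>z. act z e) \<noteq> None"
    and "(a, b) \<in> green_rel A act e"
  shows "rel_option (\<lambda>x y. (x, y) \<in> green_rel A act e) (act a s) (act b s)"
proof (cases "act a s")
  case None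
  have "(b, a) \<in> green_rel A act e" using assms(3) by (auto simp: green_rel_def)
  hence "act b s = None" using green_rel_act_Some[OF assms(1,2), of b a s] None
    by (cases "act b s") auto
  thus ?thesis using None by simp
next
  case (Some a')
  thus ?thesis using green_rel_act_Some[OF assms] by (auto simp: option_rel_Some1)
qed

lemma act_image_equivariant_image:
  assumes surj: "\<psi> ` B = Q" and eqv: "equivariant B actB actQ \<psi>"
  shows "act_image Q actQ e = \<psi> ` act_image B actB e"
proof
  show "act_image Q actQ e \<subseteq> \<psi> ` act_image B actB e"
  proof
    fix q' assume "q' \<in> act_image Q actQ e"
    then obtain w where "w \<in> B" "actQ (\<psi> w) e = Some q'"
      using surj by (auto simp: act_image_def)
    moreover from this have "map_option \<psi> (actB w e) = Some q'"
      using eqv by (simp add: equivariant_def)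
    ultimately show "q' \<in> \<psi> ` act_image B actB e" by (auto simp: act_image_def)
  qed
  show "\<psi> ` act_image B actB e \<subseteq> act_image Q actQ e"
  proof
    fix q' assume "q' \<in> \<psi> ` act_image B actB e"
    then obtain w z where "w \<in> B" "actB w e = Some z" "q' = \<psi> z" by (auto simp: act_image_def)
    moreover from this have "actQ (\<psi> w) e = Some q'"
      using eqv by (metis equivariant_def option.map(2))
    ultimately show "q' \<in> act_image Q actQ e" using surj by (auto simp: act_image_def)
  qed
qed

text \<open>\<open>\<psi>\<close> is injective on \<open>e\<close>-fixed points because \<open>\<alpha> \<sim> \<beta>\<close> forces \<open>\<alpha> e = \<beta> e\<close>.\<close>

lemma act_image_iso_if_green_fibres:
  assumes B: "partial_Sset B actB" and idem: "e * e = e"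
    and surj: "\<psi> ` B = Q" and eqv: "equivariant B actB actQ \<psi>"
    and fibres: "\<And>w1 w2. w1 \<in> B \<Longrightarrow> w2 \<in> B \<Longrightarrow> \<psi> w1 = \<psi> w2 \<Longrightarrow> (w1, w2) \<in> green_rel B actB e"
  shows "\<exists>\<phi>. bij_betw \<phi> (act_image Q actQ e) (act_image B actB e)
          \<and> (\<forall>q\<in>act_image Q actQ e. \<forall>g\<in>Hclass e. map_option \<phi> (actQ q g) = actB (\<phi> q) g)"
proof -
  let ?X = "act_image B actB e"
  have fixed: "z \<in> ?X \<longleftrightarrow> z \<in> B \<and> actB z e = Some z" for z
    by (rule act_image_idem_iff[OF B idem])
  have inj: "inj_on \<psi> ?X"
  proof (rule inj_onI)
    fix z1 z2 assume z: "z1 \<in> ?X" "z2 \<in> ?X" "\<psi> z1 = \<psi> z2"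
    hence "(z1, z2) \<in> green_rel B actB e" using fibres fixed by blast
    hence "Option.bind (actB z1 e) (\<lambda>z. actB z e) = Option.bind (actB z2 e) (\<lambda>z. actB z e)"
      by (auto simp: green_rel_def)
    thus "z1 = z2" using z fixed by simp
  qed
  have image: "act_image Q actQ e = \<psi> ` ?X"
    by (rule act_image_equivariant_image[OF surj eqv])
  show ?thesis
  proof (intro exI conjI ballI)
    show "bij_betw (inv_into ?X \<psi>) (act_image Q actQ e) ?X"
      unfolding image by (rule bij_betw_inv_into[OF inj_on_imp_bij_betw[OF inj]])
    fix q g assume q: "q \<in> act_image Q actQ e" and g: "g \<in> Hclass e"
    then obtain z where z: "z \<in> ?X" "q = \<psi> z" using image by blast
    have inv_z: "inv_into ?X \<psi> q = z" using z inv_into_f_f[OF inj] by simp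
    have "actQ q g = map_option \<psi> (actB z g)" using eqv z fixed by (simp add: equivariant_def)
    moreover have "inv_into ?X \<psi> (\<psi> z') = z'" if "actB z g = Some z'" for z'
    proof -
      have "g * e = g" using g by (simp add: Hclass_idem_iff[OF idem])
      hence "z' \<in> ?X" using act_in_act_image[OF B _ that] z fixed by blast
      thus ?thesis using inv_into_f_f[OF inj] by simp
    qed
    ultimately show "map_option (inv_into ?X \<psi>) (actQ q g) = actB (inv_into ?X \<psi> q) g"
      using inv_z by (cases "actB z g") auto
  qed
qed

text \<open>Such a \<open>\<theta>\<close> identifies the Green's relations of \<open>A\<close> and \<open>B\<close>. Only closure under the action
  is asked of \<open>A\<close>, so the tensor product need not be shown to be a partial \<open>S\<close>-set.\<close>

locale equivariant_cover =
  fixes A :: "'c set" and actA :: "'c \<Rightarrow> 'a::semigroup_mult \<Rightarrow> 'c option"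
    and B :: "'d set" and actB :: "'d \<Rightarrow> 'a \<Rightarrow> 'd option"
    and e :: 'a and \<theta> :: "'c \<Rightarrow> 'd"
  assumes closed: "\<And>C s D. C \<in> A \<Longrightarrow> actA C s = Some D \<Longrightarrow> D \<in> A"
    and partial_Sset: "partial_Sset B actB"
    and reach: "\<forall>y\<in>B. \<exists>t. Option.bind (actB y t) (\<lambda>z. actB z e) \<noteq> None"
    and surj: "\<theta> ` A = B"
    and equivariant: "equivariant A actA actB \<theta>"
    and inj: "inj_on \<theta> (act_image A actA e)"
begin

lemma equivariant_apply: "C \<in> A \<Longrightarrow> map_option \<theta> (actA C s) = actB (\<theta> C) s"
  using equivariant by (simp add: equivariant_def)

lemma map_bind_act_e:
  assumes C: "C \<in> A"
  shows "map_option \<theta> (Option.bind (actA C s) (\<lambda>z. actA z e))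
       = Option.bind (actB (\<theta> C) s) (\<lambda>z. actB z e)"
proof (cases "actA C s")
  case None
  thus ?thesis using equivariant_apply[OF C, of s] by simp
next
  case (Some D)
  hence "actB (\<theta> C) s = Some (\<theta> D)" using equivariant_apply[OF C, of s] by simp
  thus ?thesis using Some equivariant_apply[OF closed[OF C Some], of e] by simp
qed

lemma bind_act_e_in_act_image:
  "C \<in> A \<Longrightarrow> set_option (Option.bind (actA C s) (\<lambda>z. actA z e)) \<subseteq> act_image A actA e"
  by (cases "actA C s") (auto simp: act_image_def dest: closed)

lemma green_rel_iff:
  assumes C: "C \<in> A" and D: "D \<in> A"
  shows "(C, D) \<in> green_rel A actA e \<longleftrightarrow> (\<theta> C, \<theta> D) \<in> green_rel B actB e"
proof -
  have "Option.bind (actA C s) (\<lambda>z. actA z e) = Option.bind (actA D s) (\<lambda>z. actA z e) \<longleftrightarrow>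
        Option.bind (actB (\<theta> C) s) (\<lambda>z. actB z e) = Option.bind (actB (\<theta> D) s) (\<lambda>z. actB z e)" for s
    using map_option_inj_on_eq_iff[OF inj bind_act_e_in_act_image[OF C] bind_act_e_in_act_image[OF D]]
    by (simp add: map_bind_act_e C D)
  thus ?thesis using C D surj by (auto simp: green_rel_def)
qed

lemma gcl_act_cong:
  assumes "(C, D) \<in> green_rel A actA e"
  shows "map_option (gcl A actA e) (actA C s) = map_option (gcl A actA e) (actA D s)"
proof -
  have C: "C \<in> A" and D: "D \<in> A" using assms by (auto simp: green_rel_def)
  have "rel_option (\<lambda>x y. (x, y) \<in> green_rel B actB e) (actB (\<theta> C) s) (actB (\<theta> D) s)"
    using green_rel_act[OF partial_Sset reach] assms green_rel_iff[OF C D] by blast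
  hence "rel_option (\<lambda>x y. (\<theta> x, \<theta> y) \<in> green_rel B actB e) (actA C s) (actA D s)"
    by (simp add: option.rel_map flip: equivariant_apply[OF C] equivariant_apply[OF D])
  hence "rel_option (\<lambda>x y. gcl A actA e x = gcl A actA e y) (actA C s) (actA D s)"
  proof (rule option.rel_mono_strong)
    fix x y assume "x \<in> set_option (actA C s)" "y \<in> set_option (actA D s)"
      and "(\<theta> x, \<theta> y) \<in> green_rel B actB e"
    hence "(x, y) \<in> green_rel A actA e" using green_rel_iff closed[OF C] closed[OF D] by auto
    thus "gcl A actA e x = gcl A actA e y" unfolding gcl_def by (rule equiv_class_eq[OF green_rel_equiv])
  qed
  thus ?thesis by (cases "actA C s"; cases "actA D s") auto
qed

definition quot_map :: "'d \<Rightarrow> 'c set" where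
  "quot_map w = gcl A actA e (inv_into A \<theta> w)"

lemma quot_map_apply:
  assumes C: "C \<in> A"
  shows "quot_map (\<theta> C) = gcl A actA e C"
proof -
  let ?C' = "inv_into A \<theta> (\<theta> C)"
  have "?C' \<in> A" "\<theta> ?C' = \<theta> C" using C by (auto intro: inv_into_into f_inv_into_f)
  moreover have "(\<theta> C, \<theta> C) \<in> green_rel B actB e" using C surj by (auto simp: green_rel_def)
  ultimately have "(?C', C) \<in> green_rel A actA e" using green_rel_iff C by simp
  thus ?thesis by (simp add: quot_map_def gcl_def equiv_class_eq[OF green_rel_equiv])
qed

lemma quot_map_eq_iff:
  assumes "w1 \<in> B" "w2 \<in> B"
  shows "quot_map w1 = quot_map w2 \<longleftrightarrow> (w1, w2) \<in> green_rel B actB e"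
proof -
  obtain C1 C2 where "C1 \<in> A" "C2 \<in> A" "w1 = \<theta> C1" "w2 = \<theta> C2" using assms surj by blast
  thus ?thesis
    by (simp add: quot_map_apply gcl_def eq_equiv_class_iff[OF green_rel_equiv] green_rel_iff)
qed

lemma quot_map_image: "quot_map ` B = green_quot A actA e"
proof -
  have "quot_map ` B = gcl A actA e ` A"
    unfolding surj[symmetric] image_image by (rule image_cong[OF refl quot_map_apply])
  thus ?thesis by (auto simp: green_quot_def gcl_def quotient_def)
qed

lemma quot_map_equivariant: "equivariant B actB (gact A actA e) quot_map"
  unfolding equivariant_def
proof (intro ballI allI)
  fix w s assume "w \<in> B"
  then obtain C where C: "C \<in> A" "w = \<theta> C" using surj by blast
  have "C \<in> gcl A actA e C" using C by (auto simp: gcl_def green_rel_def)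
  hence "(SOME D. D \<in> gcl A actA e C) \<in> gcl A actA e C" by (rule someI)
  hence "gact A actA e (quot_map w) s = map_option (gcl A actA e) (actA C s)"
    using gcl_act_cong C by (simp add: gact_def quot_map_apply gcl_def)
  also have "\<dots> = map_option (quot_map \<circ> \<theta>) (actA C s)"
    using closed[OF C(1)] by (intro option.map_cong) (simp_all add: quot_map_apply)
  also have "\<dots> = map_option quot_map (actB w s)"
    using C by (simp flip: equivariant_apply option.map_comp)
  finally show "map_option quot_map (actB w s) = gact A actA e (quot_map w) s" ..
qed

end

section \<open>The tensor product \<open>\<Omega> e \<otimes> R\<^sub>J\<close>\<close>

locale partial_Sset_idem =
  fixes \<Omega> :: "'b set" and act :: "'b \<Rightarrow> 'a::semigroup_mult \<Rightarrow> 'b option" and e :: 'a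
  assumes partial_Sset: "partial_Sset \<Omega> act" and idem: "e * e = e"
begin

abbreviation "X \<equiv> act_image \<Omega> act e"
abbreviation "R \<equiv> Rclass e"
abbreviation "T \<equiv> tensor X act e"
abbreviation "Tact \<equiv> tact X act e"
abbreviation "tc \<equiv> tcl X act e"
abbreviation rep :: "('b \<times> 'a) set \<Rightarrow> 'b \<times> 'a" where "rep C \<equiv> SOME p. p \<in> C"

lemmas act_closed = partial_Sset_closed[OF partial_Sset]
  and act_mult_Some = partial_Sset_act_mult_Some[OF partial_Sset]
  and act_multD = partial_Sset_act_multD[OF partial_Sset]

lemma mem_X_iff: "x \<in> X \<longleftrightarrow> x \<in> \<Omega> \<and> act x e = Some x"
  by (rule act_image_idem_iff[OF partial_Sset idem])

lemma act_Rclass_defined: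
  assumes x: "x \<in> X" and r: "r \<in> R"
  shows "\<exists>y. act x r = Some y"
proof -
  obtain u where "r * u = e" using r by (auto simp: Rclass_idem_iff[OF idem])
  hence "act x (r * u) = Some x" using x by (simp add: mem_X_iff)
  thus ?thesis using act_multD x by (blast dest: mem_X_iff[THEN iffD1])
qed

lemma tcl_refl:
  assumes "x \<in> X" "r \<in> R"
  shows "(x, r) \<in> tc x r"
proof -
  have "act x e = Some x" "r = e * r" using assms by (simp_all add: mem_X_iff Rclass_idem_iff[OF idem])
  thus ?thesis using assms idem idem_in_Hclass[OF idem] unfolding tcl_def by blast
qed

lemma act_tcl:
  assumes x: "x \<in> X" and r: "r \<in> R" and p: "(x', r') \<in> tc x r"
  shows "act x' r' = act x r"
proof -
  obtain g h where gh: "g * h = e" "act x g = Some x'" "r' = h * r"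
    using p by (auto simp: tcl_def)
  have "act x' r' = act x (g * (h * r))" using act_mult_Some x gh by (simp add: mem_X_iff)
  also have "g * (h * r) = r" using gh(1) r by (simp add: mult.assoc[symmetric] Rclass_idem_iff[OF idem])
  finally show ?thesis .
qed

lemma tcl_subset:
  assumes x: "x \<in> X" and p: "(x', r') \<in> tc x r"
  shows "tc x' r' \<subseteq> tc x r"
proof
  fix q assume q: "q \<in> tc x' r'"
  obtain g h where g: "g \<in> Hclass e" "h \<in> Hclass e" "g * h = e" "h * g = e" "act x g = Some x'" "r' = h * r"
    using p by (auto simp: tcl_def)
  obtain y r'' g' h' where q': "q = (y, r'')" "y \<in> X" "r'' \<in> R"
    and g': "g' \<in> Hclass e" "h' \<in> Hclass e" "g' * h' = e" "h' * g' = e" "act x' g' = Some y" "r'' = h' * r'"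
    using q by (auto simp: tcl_def)
  have "act x (g * g') = Some y" using act_mult_Some x g g' by (simp add: mem_X_iff)
  moreover have "(g * g') * (h' * h) = e" "(h' * h) * (g * g') = e" "r'' = (h' * h) * r"
    using g g' idem by (simp_all add: mult.assoc) (metis Hclass_idem_iff[OF idem] mult.assoc)+
  ultimately show "q \<in> tc x r"
    using q' g g' Hclass_mult_closed[OF idem] by (auto simp: tcl_def)
qed

lemma tcl_sym:
  assumes x: "x \<in> X" and r: "r \<in> R" and p: "(x', r') \<in> tc x r"
  shows "(x, r) \<in> tc x' r'"
proof -
  obtain g h where g: "g \<in> Hclass e" "h \<in> Hclass e" "g * h = e" "h * g = e" "act x g = Some x'" "r' = h * r"
    using p by (auto simp: tcl_def)
  have "act x' h = act x (g * h)" using act_mult_Some[of x g x' h] x g(5) by (simp add: mem_X_iff)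
  hence "act x' h = Some x" using g(3) x by (simp add: mem_X_iff)
  moreover have "r = g * r'" using g r by (simp add: mult.assoc[symmetric] Rclass_idem_iff[OF idem])
  ultimately show ?thesis using g x r unfolding tcl_def by blast
qed

lemma tcl_eq:
  assumes x: "x \<in> X" and r: "r \<in> R" and p: "(x', r') \<in> tc x r"
  shows "tc x' r' = tc x r"
proof
  show "tc x' r' \<subseteq> tc x r" by (rule tcl_subset[OF x p])
  have "x' \<in> X" using p by (simp add: tcl_def)
  thus "tc x r \<subseteq> tc x' r'" by (rule tcl_subset[OF _ tcl_sym[OF assms]])
qed

lemma tensor_repE:
  assumes "C \<in> T"
  obtains x r where "rep C = (x, r)" "x \<in> X" "r \<in> R" "C = tc x r"
proof -
  obtain x0 r0 where C: "C = tc x0 r0" "x0 \<in> X" "r0 \<in> R" using assms by (auto simp: tensor_def)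
  hence "rep C \<in> C" using tcl_refl by (metis someI)
  moreover obtain x r where "rep C = (x, r)" by fastforce
  ultimately show ?thesis using that C tcl_eq by (auto simp: tcl_def)
qed

text \<open>The evaluation map \<open>\<theta>(x \<otimes> r) = x r\<close>; it does not depend on the representative by \<open>act_tcl\<close>.\<close>

definition tensor_eval :: "('b \<times> 'a) set \<Rightarrow> 'b" where
  "tensor_eval C = the (act (fst (rep C)) (snd (rep C)))"

lemma tensor_eval_rep:
  assumes "C \<in> T" "rep C = (x, r)"
  shows "act x r = Some (tensor_eval C)"
  using assms act_Rclass_defined by (elim tensor_repE) (auto simp: tensor_eval_def)

lemma tensor_eval_tcl:
  assumes x: "x \<in> X" and r: "r \<in> R"
  shows "act x r = Some (tensor_eval (tc x r))"
proof -
  have "rep (tc x r) \<in> tc x r" using tcl_refl[OF x r] by (rule someI)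
  thus ?thesis using act_tcl[OF x r] act_Rclass_defined[OF x r]
    by (auto simp: tensor_eval_def split: prod.splits)
qed

lemma tensor_eval_in: "C \<in> T \<Longrightarrow> tensor_eval C \<in> \<Omega>"
  by (metis tensor_repE tensor_eval_rep act_closed mem_X_iff)

lemma act_tensor_eval:
  assumes "C \<in> T" "rep C = (x, r)"
  shows "act (tensor_eval C) s = act x (r * s)"
  using assms act_mult_Some tensor_eval_rep by (metis tensor_repE mem_X_iff prod.inject)

lemma tact_rep:
  "rep C = (x, r) \<Longrightarrow> Tact C s = (if r * s \<in> R then Some (tc x (r * s)) else None)"
  by (simp add: tact_def)

lemma tact_closed:
  assumes "C \<in> T" "Tact C s = Some D"
  shows "D \<in> T"
  using assms by (elim tensor_repE) (auto simp: tact_rep tensor_def split: if_splits)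

end

locale apex_partial_Sset = partial_Sset_idem \<Omega> act e
  for \<Omega> :: "'b set" and act :: "'b \<Rightarrow> 'a::{finite, semigroup_mult} \<Rightarrow> 'b option" and e +
  fixes J :: "'a set"
  assumes Jclass: "is_Jclass J" and e_in_J: "e \<in> J" and semisimple: "semisimple \<Omega> act"
    and apex: "\<forall>x\<in>\<Omega>. apex act (strong_orbit \<Omega> act x) J"
begin

lemma minimal_hitting_J: "x \<in> \<Omega> \<Longrightarrow> minimal_hitting act (strong_orbit \<Omega> act x) J"
  using apex by (simp add: apex_def)

text \<open>\<open>a u\<close> hits the strong orbit of \<open>x\<close> and lies \<open>\<J>\<close>-below \<open>e\<close>, so minimality of the apex
  puts it in \<open>J\<close>; stability of finite semigroups then gives \<open>a \<R> e\<close>.\<close>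

lemma stabilizer_Rclass:
  assumes x: "x \<in> \<Omega>" and a: "e * a = a" and xa: "act x (a * u) = Some x"
  shows "a \<in> R"
proof -
  have ea: "e * (a * u) = a * u" using a by (simp add: mult.assoc[symmetric])
  have "Jclass (a * u) \<in> hitting_Jclasses act (strong_orbit \<Omega> act x)"
    using x xa by (auto simp: hitting_Jclasses_def is_Jclass_def orbit_hit_def strong_orbit_def Jclass_def)
  moreover have "Jclass_le (Jclass (a * u)) J"
    using e_in_J tideal_mult_subset[of e "a * u"] ea by (auto simp: Jclass_le_def Jclass_def)
  ultimately have "Jclass (a * u) = J" using minimal_hitting_J[OF x] by (simp add: minimal_hitting_def)
  hence "e \<in> tideal (a * u)" using e_in_J by (auto simp: Jclass_def tideal_def)
  then obtain p q where pq: "e = p * (a * u) * q" using idem_in_tideal_factor idem by blast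
  have "p * e * (a * u * q) = p * (e * (a * u)) * q" by (simp only: mult.assoc)
  also have "\<dots> = e" by (simp only: ea flip: pq)
  finally have "e \<in> rideal (e * (a * u * q))" by (intro finite_semigroup_stable_right[of e p]) simp
  hence "e \<in> rideal (a * (u * q))" using a by (simp add: mult.assoc[symmetric])
  hence "\<exists>w. a * w = e" by (auto simp: rideal_def mult.assoc)
  thus ?thesis using a by (simp add: Rclass_idem_iff[OF idem])
qed

lemma Rclass_mult_defined:
  assumes x: "x \<in> X" and r: "r \<in> R" and xrs: "act x (r * s) = Some y"
  shows "r * s \<in> R"
proof -
  have xx: "x \<in> \<Omega>" "act x e = Some x" using x by (simp_all add: mem_X_iff)
  obtain w where w: "act x r = Some w" using act_Rclass_defined[OF x r] by blast
  have w\<Omega>: "w \<in> \<Omega>" using act_closed[OF xx(1) w] .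
  have wy: "act w s = Some y" using act_mult_Some[OF xx(1) w] xrs by simp
  obtain u where "r * u = e" using r by (auto simp: Rclass_idem_iff[OF idem])
  hence "act w u = Some x" using act_mult_Some[OF xx(1) w, of u] xx(2) by simp
  hence "x \<in> orbit1 act w" by (auto simp: orbit1_def)
  moreover have "y \<in> strong_orbit \<Omega> act w"
  proof -
    have "invariant_orbit act (strong_orbit \<Omega> act w)" using semisimple w\<Omega> by (simp add: semisimple_def)
    moreover have "w \<in> strong_orbit \<Omega> act w" using w\<Omega> by (simp add: strong_orbit_def)
    ultimately show ?thesis using wy unfolding invariant_orbit_def by blast
  qed
  ultimately have "x \<in> orbit1 act y" by (simp add: strong_orbit_def)
  then obtain t where "act y t = Some x" using orbit1_fixed(2)[of act x e, OF xx(2)] by blast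
  hence "act x (r * (s * t)) = Some x"
    using act_mult_Some[OF xx(1) w] act_mult_Some[OF w\<Omega> wy] by simp
  moreover have "e * (r * s) = r * s" using r by (simp add: mult.assoc[symmetric] Rclass_idem_iff[OF idem])
  ultimately show ?thesis using stabilizer_Rclass[OF xx(1)] by (simp add: mult.assoc)
qed

lemma act_image_meets_strong_orbit:
  assumes w: "w \<in> \<Omega>"
  shows "\<exists>z\<in>X. orbit1 act z = orbit1 act w"
proof -
  have "J \<in> hitting_Jclasses act (strong_orbit \<Omega> act w)"
    using minimal_hitting_J[OF w] by (simp add: minimal_hitting_def)
  then obtain s x1 y1 where s: "s \<in> J" and x1: "x1 \<in> strong_orbit \<Omega> act w"
    and y1: "y1 \<in> strong_orbit \<Omega> act w" and x1s: "act x1 s = Some y1"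
    unfolding hitting_Jclasses_def orbit_hit_def by blast
  have x1\<Omega>: "x1 \<in> \<Omega>" using x1 by (simp add: strong_orbit_def)
  have "tideal s = tideal e" using s e_in_J Jclass by (auto simp: is_Jclass_def Jclass_def)
  moreover have "s \<in> tideal s" by (simp add: tideal_def)
  ultimately obtain p q where "s = p * e * q" using tideal_idem_factor idem by metis
  then obtain z where z: "act x1 (p * e) = Some z" and zq: "act z q = Some y1"
    using act_multD[OF x1\<Omega>] x1s by blast
  obtain m where "act x1 p = Some m" "act m e = Some z" using act_multD[OF x1\<Omega> z] by blast
  hence zX: "z \<in> X" using act_closed[OF x1\<Omega>] by (auto simp: act_image_def)
  have "z \<in> orbit1 act x1" "y1 \<in> orbit1 act z" using z zq by (auto simp: orbit1_def)
  hence "orbit1 act z \<subseteq> orbit1 act x1" "orbit1 act y1 \<subseteq> orbit1 act z"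
    using orbit1_trans[OF partial_Sset] x1\<Omega> zX by (auto simp: mem_X_iff)
  moreover have "orbit1 act x1 = orbit1 act w" "orbit1 act y1 = orbit1 act w"
    using x1 y1 by (simp_all add: strong_orbit_def)
  ultimately show ?thesis using zX by blast
qed

lemma exists_tensor_preimage:
  assumes w: "w \<in> \<Omega>"
  shows "\<exists>z\<in>X. \<exists>r\<in>R. act z r = Some w"
proof -
  obtain z where zX: "z \<in> X" and orb: "orbit1 act z = orbit1 act w"
    using act_image_meets_strong_orbit[OF w] by blast
  have z: "z \<in> \<Omega>" "act z e = Some z" using zX by (simp_all add: mem_X_iff)
  have "w \<in> orbit1 act z" unfolding orb by (simp add: orbit1_def)
  moreover have "z \<in> orbit1 act w" unfolding orb[symmetric] by (simp add: orbit1_def)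
  ultimately obtain t t' where zt: "act z t = Some w" and wt': "act w t' = Some z"
    using orbit1_fixed[of act z e, OF z(2)] by blast
  have zet: "act z (e * t) = Some w" using act_mult_Some[OF z] zt by simp
  hence "act z ((e * t) * t') = Some z" using act_mult_Some[OF z(1) zet] wt' by simp
  hence "e * t \<in> R" using stabilizer_Rclass[OF z(1)] idem by (simp add: mult.assoc[symmetric])
  thus ?thesis using zX zet by blast
qed

lemma tensor_eval_image: "tensor_eval ` T = \<Omega>"
proof
  show "tensor_eval ` T \<subseteq> \<Omega>" using tensor_eval_in by blast
  show "\<Omega> \<subseteq> tensor_eval ` T"
  proof
    fix w assume "w \<in> \<Omega>"
    then obtain z r where "z \<in> X" "r \<in> R" "act z r = Some w" using exists_tensor_preimage by blast
    moreover from this have "tc z r \<in> T" by (auto simp: tensor_def)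
    ultimately show "w \<in> tensor_eval ` T" using tensor_eval_tcl by force
  qed
qed

lemma tensor_eval_equivariant: "equivariant T Tact act tensor_eval"
  unfolding equivariant_def
proof (intro ballI allI)
  fix C s assume C: "C \<in> T"
  then obtain x r where xr: "rep C = (x, r)" "x \<in> X" "r \<in> R" by (elim tensor_repE)
  show "map_option tensor_eval (Tact C s) = act (tensor_eval C) s"
  proof (cases "r * s \<in> R")
    case True
    thus ?thesis using xr tensor_eval_tcl act_tensor_eval[OF C xr(1)] by (simp add: tact_rep)
  next
    case False
    hence "act x (r * s) = None" using Rclass_mult_defined[OF xr(2,3)] by fastforce
    thus ?thesis using False act_tensor_eval[OF C xr(1)] by (simp add: tact_rep[OF xr(1)])
  qed
qed

lemma tensor_act_image_eq:
  assumes "D \<in> act_image T Tact e"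
  shows "D = tc (tensor_eval D) e"
proof -
  obtain C where C: "C \<in> T" and CD: "Tact C e = Some D" using assms by (auto simp: act_image_def)
  then obtain x r where xr: "rep C = (x, r)" "x \<in> X" "r \<in> R" by (elim tensor_repE)
  define a where "a = r * e"
  have aR: "a \<in> R" and Da: "D = tc x a" using CD by (auto simp: a_def tact_rep[OF xr(1)] split: if_splits)
  have ae: "a * e = a" by (simp add: a_def mult.assoc idem)
  hence aH: "a \<in> Hclass e" using finite_Rclass_Hclass[OF idem aR] by blast
  then obtain b where b: "b \<in> Hclass e" "a * b = e" "b * a = e" using Hclass_inverse[OF idem] by blast
  obtain w where w: "act x a = Some w" using act_Rclass_defined[OF xr(2) aR] by blast
  have x\<Omega>: "x \<in> \<Omega>" using xr(2) by (simp add: mem_X_iff)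
  have wX: "w \<in> X" using act_in_act_image[OF partial_Sset x\<Omega> w ae] .
  have eR: "e \<in> R" using idem_in_Hclass[OF idem] by (simp add: Hclass_def)
  have "\<exists>g\<in>Hclass e. \<exists>h\<in>Hclass e. g * h = e \<and> h * g = e \<and> act x g = Some w \<and> e = h * a"
    using aH b w by (intro bexI[of _ a] bexI[of _ b]) auto
  hence "(w, e) \<in> tc x a" using wX eR by (simp add: tcl_def)
  hence "tc w e = D" using tcl_eq[OF xr(2) aR] Da by simp
  moreover have "tensor_eval (tc w e) = w" using tensor_eval_tcl[OF wX eR] wX by (simp add: mem_X_iff)
  ultimately show ?thesis by simp
qed

lemma inj_on_tensor_eval: "inj_on tensor_eval (act_image T Tact e)"
  by (rule inj_onI) (metis tensor_act_image_eq)

lemma act_e_reachable: "\<forall>y\<in>\<Omega>. \<exists>t. Option.bind (act y t) (\<lambda>z. act z e) \<noteq> None"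
proof
  fix y assume "y \<in> \<Omega>"
  then obtain z r where z: "z \<in> X" "r \<in> R" "act z r = Some y" using exists_tensor_preimage by blast
  obtain u where "r * u = e" using z(2) by (auto simp: Rclass_idem_iff[OF idem])
  hence "act y u = Some z" using act_mult_Some[of z r y u] z by (simp add: mem_X_iff)
  thus "\<exists>t. Option.bind (act y t) (\<lambda>z. act z e) \<noteq> None"
    using z(1) by (intro exI[of _ u]) (simp add: mem_X_iff)
qed

sublocale cover: equivariant_cover T Tact \<Omega> act e tensor_eval
  using tact_closed partial_Sset act_e_reachable tensor_eval_image tensor_eval_equivariant
    inj_on_tensor_eval
  by unfold_locales blast+

end

theorem proposition2p7:
  fixes J :: "'a::{finite, semigroup_mult} set"
    and e :: 'a
    and \<Omega> :: "'b set"
    and act :: "'b \<Rightarrow> 'a \<Rightarrow> 'b option"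
  assumes "regular_Jclass J"
    and "e \<in> J" and "e * e = e"
    and "partial_Sset \<Omega> act"
    and "semisimple \<Omega> act"
    and "\<forall>x\<in>\<Omega>. apex act (strong_orbit \<Omega> act x) J"
  defines "T \<equiv> tensor (act_image \<Omega> act e) act e"
    and "Tact \<equiv> tact (act_image \<Omega> act e) act e"
  shows "(\<exists>\<theta>. \<theta> ` T = \<Omega> \<and> equivariant T Tact act \<theta>
              \<and> inj_on \<theta> (act_image T Tact e))
       \<and> (\<exists>\<psi>. \<psi> ` \<Omega> = green_quot T Tact e \<and> equivariant \<Omega> act (gact T Tact e) \<psi>)
       \<and> (\<exists>\<phi>. bij_betw \<phi> (act_image (green_quot T Tact e) (gact T Tact e) e) (act_image \<Omega> act e)
              \<and> (\<forall>q\<in>act_image (green_quot T Tact e) (gact T Tact e) e. \<forall>g\<in>Hclass e.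
                    map_option \<phi> (gact T Tact e q g) = act (\<phi> q) g))"
proof -
  interpret apex_partial_Sset \<Omega> act e J
    using assms(1-6) by unfold_locales (auto simp: regular_Jclass_def)
  show ?thesis
    unfolding T_def Tact_def
    using tensor_eval_image tensor_eval_equivariant inj_on_tensor_eval
      cover.quot_map_image cover.quot_map_equivariant
      act_image_iso_if_green_fibres[OF partial_Sset idem cover.quot_map_image
        cover.quot_map_equivariant cover.quot_map_eq_iff[THEN iffD1]]
    by blast
qed

end
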